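(* Let $g\in\mathbb{R}^d$ with $\|g\|=1$, and let $R,C,B,\eta>0$ with $R<1$ and $C>B$. For $w,r\in\mathbb{R}^d$ let $F(w,r)=\eta\|g+r\|^2-2\langle w,g+r\rangle$, and let $$F^*=\max\{F(w,r):\ \langle g,w\rangle\ge B,\ \|r\|^2\le R^2,\ \|w\|^2\le C^2\}.$$ Then $$F^*\le\max\left\{\eta(1+R^2)+2R\sqrt{\eta^2+C^2-2\eta B}-2B,\ \eta(R^2-1)\right\}.$$
   Context: $\|\cdot\|$ denotes the Euclidean norm and $\langle\cdot,\cdot\rangle$ the Euclidean inner product on $\mathbb{R}^d$. *)

theory Defs
  imports "HOL-Analysis.Analysis"
begin

end

theory Submission
  imports Defs
begin

text \<open>With \<open>\<parallel>g\<parallel> = 1\<close>, expanding the square gives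
  \<open>F(w,r) = \<eta> + \<eta>\<parallel>r\<parallel>\<^sup>2 - 2\<langle>g,w\<rangle> + 2\<langle>\<eta>g - w, r\<rangle>\<close>.
  The last term is at most \<open>2R\<parallel>\<eta>g - w\<parallel>\<close> by Cauchy-Schwarz, and
  \<open>\<parallel>\<eta>g - w\<parallel>\<^sup>2 = \<eta>\<^sup>2 - 2\<eta>\<langle>g,w\<rangle> + \<parallel>w\<parallel>\<^sup>2 \<le> \<eta>\<^sup>2 + C\<^sup>2 - 2\<eta>B\<close>, so the first term of the
  maximum is already an upper bound.\<close>

lemma power2_norm_add_unit:
  fixes g r :: "'a::real_inner"
  assumes "norm g = 1"
  shows "(norm (g + r))\<^sup>2 = 1 + 2 * (g \<bullet> r) + (norm r)\<^sup>2"
  using assms by (simp add: norm_eq_1 power2_norm_eq_inner inner_add_left inner_add_right inner_commute)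

lemma power2_norm_scaleR_unit_diff:
  fixes g w :: "'a::real_inner"
  assumes "norm g = 1"
  shows "(norm (\<eta> *\<^sub>R g - w))\<^sup>2 = \<eta>\<^sup>2 - 2 * \<eta> * (g \<bullet> w) + (norm w)\<^sup>2"
  using assms unfolding norm_eq_1 power2_norm_eq_inner
  by (simp add: inner_commute power2_eq_square algebra_simps)

lemma objective_eq_unit:
  fixes g w r :: "'a::real_inner"
  assumes "norm g = 1"
  shows "\<eta> * (norm (g + r))\<^sup>2 - 2 * (w \<bullet> (g + r))
           = \<eta> + \<eta> * (norm r)\<^sup>2 - 2 * (g \<bullet> w) + 2 * ((\<eta> *\<^sub>R g - w) \<bullet> r)"
  unfolding power2_norm_add_unit[OF assms]
  by (simp add: algebra_simps inner_commute)

lemma objective_le_unit: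
  fixes g w r :: "'a::real_inner"
  assumes "norm g = 1" and "R \<ge> 0" and "\<eta> \<ge> 0"
    and "g \<bullet> w \<ge> B" and "(norm r)\<^sup>2 \<le> R\<^sup>2" and "(norm w)\<^sup>2 \<le> C\<^sup>2"
  shows "\<eta> * (norm (g + r))\<^sup>2 - 2 * (w \<bullet> (g + r))
           \<le> \<eta> * (1 + R\<^sup>2) + 2 * R * sqrt (\<eta>\<^sup>2 + C\<^sup>2 - 2 * \<eta> * B) - 2 * B"
proof -
  let ?S = "sqrt (\<eta>\<^sup>2 + C\<^sup>2 - 2 * \<eta> * B)"
  have "norm r \<le> R"
    using assms(5,2) by (rule power2_le_imp_le)
  have "\<eta> * B \<le> \<eta> * (g \<bullet> w)"
    using assms(4,3) by (rule mult_left_mono)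
  then have "(norm (\<eta> *\<^sub>R g - w))\<^sup>2 \<le> \<eta>\<^sup>2 + C\<^sup>2 - 2 * \<eta> * B"
    using power2_norm_scaleR_unit_diff[of g \<eta> w, OF assms(1)] assms(6) by linarith
  then have "norm (\<eta> *\<^sub>R g - w) \<le> ?S"
    by (rule real_le_rsqrt)
  have "(\<eta> *\<^sub>R g - w) \<bullet> r \<le> norm (\<eta> *\<^sub>R g - w) * norm r"
    by (rule norm_cauchy_schwarz)
  also have "\<dots> \<le> ?S * R"
    using \<open>norm (\<eta> *\<^sub>R g - w) \<le> ?S\<close> \<open>norm r \<le> R\<close> by (simp add: mult_mono')
  finally have "(\<eta> *\<^sub>R g - w) \<bullet> r \<le> R * ?S"
    by (simp add: mult.commute)
  moreover have "\<eta> * (norm r)\<^sup>2 \<le> \<eta> * R\<^sup>2"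
    using assms(3,5) by (rule mult_left_mono[rotated])
  ultimately show ?thesis
    using objective_eq_unit[where \<eta> = \<eta> and w = w and r = r, OF assms(1)] assms(4)
    by (simp add: algebra_simps)
qed

theorem lemma7p1:
  fixes g :: "'a::euclidean_space" and R C B \<eta> :: real
    and F :: "'a \<Rightarrow> 'a \<Rightarrow> real"
  assumes "norm g = 1"
    and "R > 0" and "C > 0" and "B > 0" and "\<eta> > 0"
    and "R < 1" and "C > B"
    and "\<And>w r. F w r = \<eta> * (norm (g + r))\<^sup>2 - 2 * (w \<bullet> (g + r))"
  shows "\<forall>w r. g \<bullet> w \<ge> B \<and> (norm r)\<^sup>2 \<le> R\<^sup>2 \<and> (norm w)\<^sup>2 \<le> C\<^sup>2 \<longrightarrow>
           F w r \<le> max (\<eta> * (1 + R\<^sup>2) + 2 * R * sqrt (\<eta>\<^sup>2 + C\<^sup>2 - 2 * \<eta> * B) - 2 * B)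
                        (\<eta> * (R\<^sup>2 - 1))"
proof (intro allI impI)
  fix w r :: 'a
  assume "g \<bullet> w \<ge> B \<and> (norm r)\<^sup>2 \<le> R\<^sup>2 \<and> (norm w)\<^sup>2 \<le> C\<^sup>2"
  then have "F w r \<le> \<eta> * (1 + R\<^sup>2) + 2 * R * sqrt (\<eta>\<^sup>2 + C\<^sup>2 - 2 * \<eta> * B) - 2 * B"
    using objective_le_unit[of g R \<eta> B w r C] assms(1,2,5,8) by simp
  then show "F w r \<le> max (\<eta> * (1 + R\<^sup>2) + 2 * R * sqrt (\<eta>\<^sup>2 + C\<^sup>2 - 2 * \<eta> * B) - 2 * B)
                          (\<eta> * (R\<^sup>2 - 1))"
    by (rule max.coboundedI1)
qed

end
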